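(* Let $k\ge 2$ be an integer, let $N\ge 2k-1$ be an integer, and let $\tau\colon\{0,1\}^*\to\{0,1,\#\}^*$ be the $N$-uniform substitution defined by $\tau(0)=\#0^{k-2}0^{N-2k+2}0^{k-1}$ and $\tau(1)=\#0^{k-2}1^{N-2k+2}0^{k-1}$. Let $\mathbf{w}$ be an infinite binary word. If $u_0\cdots u_{e-1}$ with $e\ge N$ is a $k$-abelian power occurring in $\tau(\mathbf{w})$, then $N$ divides $|u_0|$.
   Context: For finite words $u,x$, $|u|_x$ denotes the number of occurrences of $x$ as a factor of $u$. Two finite words $u,v$ are $k$-abelian equivalent, written $u\sim_k v$, if $|u|_x=|v|_x$ for every nonempty word $x$ of length at most $k$. A $k$-abelian power of exponent $e$ (a positive integer) and period $m$ is a nonempty word $u_0\cdots u_{e-1}$ with $|u_0|=m$ and $u_0\sim_k\cdots\sim_k u_{e-1}$. The image $\tau(\mathbf{w})$ of an infinite word is obtained by applying $\tau$ letter by letter. *)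

theory Defs
  imports Main
begin

datatype sym = Zero | One | Hash

definition occ :: "'a list \<Rightarrow> 'a list \<Rightarrow> nat" where
  "occ u x = card {i. i + length x \<le> length u \<and> take (length x) (drop i u) = x}"

definition k_abelian_eq :: "nat \<Rightarrow> 'a list \<Rightarrow> 'a list \<Rightarrow> bool" where
  "k_abelian_eq k u v \<longleftrightarrow> (\<forall>x. x \<noteq> [] \<and> length x \<le> k \<longrightarrow> occ u x = occ v x)"

definition k_abelian_power :: "nat \<Rightarrow> nat \<Rightarrow> nat \<Rightarrow> 'a list \<Rightarrow> bool" where
  "k_abelian_power k e m v \<longleftrightarrow> e > 0 \<and> v \<noteq> [] \<and>
     (\<exists>us. length us = e \<and> concat us = v \<and> length (us ! 0) = m \<and>
        (\<forall>i<e. \<forall>j<e. k_abelian_eq k (us ! i) (us ! j)))"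

text \<open>The N-uniform substitution; binary letters: False = 0, True = 1.\<close>
definition tau :: "nat \<Rightarrow> nat \<Rightarrow> bool \<Rightarrow> sym list" where
  "tau k N b = [Hash] @ replicate (k - 2) Zero @ replicate (N - 2 * k + 2) (if b then One else Zero)
               @ replicate (k - 1) Zero"

text \<open>Image of an infinite binary word (valid when every image has length N).\<close>
definition tau_word :: "nat \<Rightarrow> nat \<Rightarrow> (nat \<Rightarrow> bool) \<Rightarrow> nat \<Rightarrow> sym" where
  "tau_word k N w n = tau k N (w (n div N)) ! (n mod N)"

definition occurs_in :: "'a list \<Rightarrow> (nat \<Rightarrow> 'a) \<Rightarrow> bool" where
  "occurs_in v s \<longleftrightarrow> (\<exists>i. \<forall>j<length v. v ! j = s (i + j))"

end

theory Submission
  imports Defs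
begin

text \<open>In the image under \<open>\<tau>\<close> the letter \<open>#\<close> occurs exactly at the positions divisible by \<open>N\<close>.
  The first \<open>N\<close> blocks of a \<open>k\<close>-abelian power of period \<open>m\<close> form a factor of length \<open>N m\<close>,
  which therefore contains exactly \<open>m\<close> letters \<open>#\<close>. Since the blocks are in particular
  abelian equivalent, each of them contains the same number \<open>c\<close> of \<open>#\<close>, so \<open>m = N c\<close>.\<close>

lemma occ_singleton: "occ u [x] = count_list u x"
proof -
  have "{i. i + length [x] \<le> length u \<and> take (length [x]) (drop i u) = [x]}
        = {i. i < length u \<and> u ! i = x}"
    by (auto simp: take_Suc_conv_app_nth)
  then show ?thesis
    by (simp add: occ_def count_list_eq_length_filter length_filter_conv_card eq_commute)
qed

lemma k_abelian_eq_count_list: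
  assumes "1 \<le> k" "k_abelian_eq k u v"
  shows "count_list u x = count_list v x"
  using assms by (simp add: k_abelian_eq_def flip: occ_singleton)

lemma k_abelian_eq_length:
  assumes "1 \<le> k" "k_abelian_eq k u v"
  shows "length u = length v"
proof -
  have "length u = sum (count_list u) (set u \<union> set v)" by (simp add: sum_count_set)
  also have "\<dots> = sum (count_list v) (set u \<union> set v)"
    using k_abelian_eq_count_list[OF assms] by simp
  also have "\<dots> = length v" by (simp add: sum_count_set)
  finally show ?thesis .
qed

lemma concat_uniform_blocks:
  assumes "\<forall>u\<in>set us. length u = m \<and> count_list u x = c"
  shows "length (concat us) = length us * m \<and> count_list (concat us) x = length us * c"
  using assms by (induction us) auto

lemma k_abelian_power_prefix:
  assumes "1 \<le> k" "k_abelian_power k e m v" "n \<le> e"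
  shows "n * m \<le> length v" "count_list (take (n * m) v) x = n * count_list (take m v) x"
proof -
  obtain us where us: "length us = e" "concat us = v" "length (us ! 0) = m"
    "\<forall>i<e. \<forall>j<e. k_abelian_eq k (us ! i) (us ! j)"
    using assms(2) unfolding k_abelian_power_def by blast
  have "0 < e" using assms(2) by (simp add: k_abelian_power_def)
  then have "take m v = us ! 0" using us by (cases us) auto
  have "length u = m \<and> count_list u x = count_list (us ! 0) x" if "u \<in> set (take n us)" for u
  proof -
    have "u \<in> set us" using that by (rule in_set_takeD)
    then obtain j where "j < e" "u = us ! j"
      using us(1) by (metis in_set_conv_nth)
    then show ?thesis
      using us \<open>0 < e\<close> k_abelian_eq_length[OF assms(1)] k_abelian_eq_count_list[OF assms(1)]
      by metis
  qed
  then have blocks: "length (concat (take n us)) = n * m"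
      "count_list (concat (take n us)) x = n * count_list (us ! 0) x"
    using concat_uniform_blocks[of "take n us" m x] assms(3) us(1) by auto
  have "v = concat (take n us) @ concat (drop n us)"
    using us(2) by (metis append_take_drop_id concat_append)
  then have "take (n * m) v = concat (take n us)" and "n * m \<le> length v"
    using blocks(1) by (metis append_eq_conv_conj, metis le_add1 length_append)
  then show "n * m \<le> length v" "count_list (take (n * m) v) x = n * count_list (take m v) x"
    using blocks(2) \<open>take m v = us ! 0\<close> by auto
qed

lemma dvd_add_iff_mod:
  assumes "0 < (N::nat)"
  shows "N dvd (i + p) \<longleftrightarrow> p mod N = (N - i mod N) mod N"
proof -
  define a b where "a = i mod N" and "b = p mod N"
  have ab: "a < N" "b < N" using assms by (simp_all add: a_def b_def)
  have "N dvd (i + p) \<longleftrightarrow> N dvd (a + b)"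
    unfolding a_def b_def by (simp add: dvd_eq_mod_eq_0 mod_add_eq)
  also have "\<dots> \<longleftrightarrow> b = (N - a) mod N"
  proof (cases "a = 0")
    case True then show ?thesis using ab by (simp add: dvd_eq_mod_eq_0)
  next
    case False
    have "N dvd (a + b) \<longleftrightarrow> a + b = N"
    proof
      assume "N dvd (a + b)"
      then obtain q where q: "a + b = N * q" unfolding dvd_def by blast
      have "0 < N * q" "N * q < N * 2" unfolding q[symmetric] using False ab by linarith+
      then have "q = 1" by simp
      with q show "a + b = N" by simp
    qed simp
    then show ?thesis using False ab by auto
  qed
  finally show ?thesis by (simp add: b_def a_def)
qed

lemma card_mod_eq_below:
  assumes "r < (N::nat)"
  shows "card {p. p < N * m \<and> p mod N = r} = m"
proof -
  have "{p. p < N * m \<and> p mod N = r} = (\<lambda>t. t * N + r) ` {..<m}"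
  proof (intro set_eqI iffI)
    fix p assume "p \<in> {p. p < N * m \<and> p mod N = r}"
    then show "p \<in> (\<lambda>t. t * N + r) ` {..<m}"
      by (auto intro!: image_eqI[of _ _ "p div N"] simp: less_mult_imp_div_less mult.commute)
  next
    fix p assume "p \<in> (\<lambda>t. t * N + r) ` {..<m}"
    then obtain t where t: "t < m" "p = t * N + r" by auto
    have "t * N + r < Suc t * N" using assms by simp
    also have "\<dots> \<le> m * N" using t by (intro mult_right_mono) auto
    finally show "p \<in> {p. p < N * m \<and> p mod N = r}" using assms t by (simp add: mult.commute)
  qed
  moreover have "inj_on (\<lambda>t. t * N + r) {..<m}" using assms by (auto simp: inj_on_def)
  ultimately show ?thesis by (simp add: card_image)
qed

lemma card_dvd_shift_below:
  assumes "0 < (N::nat)"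
  shows "card {p. p < N * m \<and> N dvd (i + p)} = m"
  using card_mod_eq_below[of "(N - i mod N) mod N" N m] assms
  by (simp add: dvd_add_iff_mod)

lemma nth_tau_eq_Hash_iff:
  assumes "2 \<le> k" "2 * k - 1 \<le> N" "j < N"
  shows "tau k N b ! j = Hash \<longleftrightarrow> j = 0"
proof (cases j)
  case (Suc j')
  define body where "body = replicate (k - 2) Zero @
    replicate (N - 2 * k + 2) (if b then One else Zero) @ replicate (k - 1) Zero"
  have "j' < length body" using assms Suc by (simp add: body_def)
  then have "body ! j' \<in> set body" by (rule nth_mem)
  then have "body ! j' \<noteq> Hash" by (auto simp: body_def split: if_splits)
  then show ?thesis using Suc by (simp add: tau_def body_def)
qed (simp add: tau_def)

lemma tau_word_eq_Hash_iff:
  assumes "2 \<le> k" "2 * k - 1 \<le> N"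
  shows "tau_word k N w n = Hash \<longleftrightarrow> N dvd n"
  using nth_tau_eq_Hash_iff[OF assms, of "n mod N"] assms
  by (simp add: tau_word_def dvd_eq_mod_eq_0)

lemma count_list_occurrence:
  assumes "\<forall>j<length v. v ! j = s (i + j)"
  shows "count_list v x = card {p. p < length v \<and> s (i + p) = x}"
proof -
  have "{p. p < length v \<and> x = v ! p} = {p. p < length v \<and> s (i + p) = x}"
    using assms by auto
  then show ?thesis by (simp add: count_list_eq_length_filter length_filter_conv_card)
qed

theorem lemma5:
  fixes k N e m :: nat and w :: "nat \<Rightarrow> bool" and v :: "sym list"
  assumes "k \<ge> 2" and "N \<ge> 2 * k - 1"
    and "k_abelian_power k e m v" and "e \<ge> N"
    and "occurs_in v (tau_word k N w)"
  shows "N dvd m"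
proof -
  have "0 < N" using assms(1,2) by simp
  obtain i where i: "\<forall>j<length v. v ! j = tau_word k N w (i + j)"
    using assms(5) unfolding occurs_in_def by blast
  have "1 \<le> k" using assms(1) by simp
  note prefix = k_abelian_power_prefix[OF this assms(3,4)]
  have "count_list (take (N * m) v) Hash = card {p. p < N * m \<and> tau_word k N w (i + p) = Hash}"
    using count_list_occurrence[of "take (N * m) v" "tau_word k N w" i] i prefix(1)
    by (simp add: min_absorb2)
  also have "\<dots> = card {p. p < N * m \<and> N dvd (i + p)}"
    using tau_word_eq_Hash_iff[OF assms(1,2)] by simp
  also have "\<dots> = m" using card_dvd_shift_below[OF \<open>0 < N\<close>] .
  finally have "m = N * count_list (take m v) Hash" using prefix(2)[of Hash] by simp
  then show ?thesis by (metis dvd_triv_left)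
qed

end
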